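(* Let $\lambda_1,\lambda_2\ge0$ and let $\mathbf m\in\mathcal B(\lambda+\rho)_{res}$ be the head of its resonance family $RF(\mathbf m)$. If $RF(\mathbf m)\cap\mathcal B(\lambda+\rho)=\emptyset$, then $$RF(\mathbf m)=\{f_1^{t_1}f_2^{t_2}\mathbf m:\ 0\le t_1\le s_6+1,\ 0\le t_2\le\min\{s_2,s_5\}+1\},$$ where $s_2,s_5,s_6$ are the bounding data of $\mathbf m$ (and all these iterated lowerings are nonzero).
   Context: For $\mathbf m\in\mathbb Z_{\ge0}^6$ and integers $\lambda_1,\lambda_2\ge0$: $s_1=\lambda_2+m_5+m_6-m_1-m_2-m_3$, $s_2=\lambda_2+m_5+m_6-m_2-2m_3$, $s_3=\lambda_2+m_6-m_3-m_4$, $s_4=\lambda_2+m_6-m_4-m_5$, $s_5=\lambda_2-m_5$, $s_6=\lambda_1-m_6$. $\mathcal B(\lambda+\rho)$: all $s_j\ge-1$ and $2s_3-s_4\ge-1$. $\mathcal B(\lambda+\rho)_{res}$: $m_3=m_5$, $s_j\ge-1$ for $j\in\{1,2,5,6\}$, $s_3=s_4\le0$ even; decoration $d(\mathbf m)=-s_3/2$. Weight $k(\mathbf m)=(m_2+3m_3+2m_4+3m_5+m_6,\ m_1+m_2+2m_3+m_4+m_5)$. Arrays $\left[\begin{smallmatrix}a&b&c&b&d\\&x&y&z&\\&&k&&\end{smallmatrix}\right]$ (entries in $\mathbb Z_{\ge0}$) with operators: $e_1$: $(a,c,d;y;k)\mapsto(a-1,c+1,d-1;y+1;k+1)$, zero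 if $\min\{a,d\}=0$; $e_2$: $(b,c;x,z;k)\mapsto(b-1,c+3;x+1,z+1;k+1)$, zero if $b=0$; $f_1$: $(a,c,d;y;k)\mapsto(a+1,c-1,d+1;y-1;k-1)$, zero if $\min\{c,y,k\}=0$; $f_2$: $(b,c;x,z;k)\mapsto(b+1,c-3;x-1,z-1;k-1)$, zero if $\min\{x,z,k\}=0$ or $c<3$ (unlisted entries unchanged; both copies of $b$ change together). $A(\mathbf m)=\left[\begin{smallmatrix}m_2&m_5&m_4&m_5&m_6\\&s_2+1&s_6+1&s_5+1&\\&&d(\mathbf m)&&\end{smallmatrix}\right]$. On Lusztig data, $f_1(\mathbf m)=(m_1,m_2+1,m_3,m_4-1,m_5,m_6+1)$ and $f_2(\mathbf m)=(m_1,m_2,m_3+1,m_4-3,m_5+1,m_6)$, defined (nonzero) exactly when $f_i(A(\mathbf m))\ne0$, and $e_1(\mathbf m)=(m_1,m_2-1,m_3,m_4+1,m_5,m_6-1)$, $e_2(\mathbf m)=(m_1,m_2,m_3-1,m_4+3,m_5-1,m_6)$ likewise. For an array $A$, $\epsilon_i(A)=\max\{n\ge0:e_i^n(A)\ne0\}$ and $\mathrm{hd}(A)=e_1^{\epsilon_1(A)}e_2^{\epsilon_2(A)}(A)$. On $\mathcal B(\lambda+\rho)_{res}$, $\mathbf m\sim\mathbf n$ iff $k(\mathbf m)=k(\mathbf n)$ and $\mathrm{hd}(A(\mathbf m))=\mathrm{hd}(A(\mathbf n))$; the equivalence class of $\mathbf m$ is its resonance family $RF(\mathbf m)$. The head of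 a resonance family is its unique element $\mathbf n$ with $A(\mathbf n)=\mathrm{hd}(A(\mathbf n))$; it has the form $(n_1,0,0,n_4,0,0)$, $(n_1,n_2,0,n_4,0,0)$ or $(n_1,0,0,n_4,0,n_6)$. *)

theory Defs
  imports Main
begin

datatype ld = LD (m1: nat) (m2: nat) (m3: nat) (m4: nat) (m5: nat) (m6: nat)

definition s1 :: "nat \<Rightarrow> ld \<Rightarrow> int" where
  "s1 l2 m = int l2 + int (m5 m) + int (m6 m) - int (m1 m) - int (m2 m) - int (m3 m)"
definition s2 :: "nat \<Rightarrow> ld \<Rightarrow> int" where
  "s2 l2 m = int l2 + int (m5 m) + int (m6 m) - int (m2 m) - 2 * int (m3 m)"
definition s3 :: "nat \<Rightarrow> ld \<Rightarrow> int" where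
  "s3 l2 m = int l2 + int (m6 m) - int (m3 m) - int (m4 m)"
definition s4 :: "nat \<Rightarrow> ld \<Rightarrow> int" where
  "s4 l2 m = int l2 + int (m6 m) - int (m4 m) - int (m5 m)"
definition s5 :: "nat \<Rightarrow> ld \<Rightarrow> int" where
  "s5 l2 m = int l2 - int (m5 m)"
definition s6 :: "nat \<Rightarrow> ld \<Rightarrow> int" where
  "s6 l1 m = int l1 - int (m6 m)"

definition Bset :: "nat \<Rightarrow> nat \<Rightarrow> ld set" where
  "Bset l1 l2 = {m. s1 l2 m \<ge> -1 \<and> s2 l2 m \<ge> -1 \<and> s3 l2 m \<ge> -1 \<and> s4 l2 m \<ge> -1
      \<and> s5 l2 m \<ge> -1 \<and> s6 l1 m \<ge> -1 \<and> 2 * s3 l2 m - s4 l2 m \<ge> -1}"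

definition Bres :: "nat \<Rightarrow> nat \<Rightarrow> ld set" where
  "Bres l1 l2 = {m. m3 m = m5 m \<and> s1 l2 m \<ge> -1 \<and> s2 l2 m \<ge> -1 \<and> s5 l2 m \<ge> -1
      \<and> s6 l1 m \<ge> -1 \<and> s3 l2 m = s4 l2 m \<and> s3 l2 m \<le> 0 \<and> even (s3 l2 m)}"

text \<open>Decoration d(m) = -s_3/2 (a nonnegative integer on Bres).\<close>
definition deco :: "nat \<Rightarrow> ld \<Rightarrow> nat" where
  "deco l2 m = nat (- (s3 l2 m) div 2)"

definition wt :: "ld \<Rightarrow> nat \<times> nat" where
  "wt m = (m2 m + 3 * m3 m + 2 * m4 m + 3 * m5 m + m6 m,
           m1 m + m2 m + 2 * m3 m + m4 m + m5 m)"

text \<open>Arrays [a b c b d; x y z; k] with entries in Z>=0.\<close>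
datatype arr = Arr (ar_a: nat) (ar_b: nat) (ar_c: nat) (ar_d: nat)
                   (ar_x: nat) (ar_y: nat) (ar_z: nat) (ar_k: nat)

text \<open>Operators on arrays; None represents zero.\<close>
fun e1A :: "arr \<Rightarrow> arr option" where
  "e1A (Arr a b c d x y z k) =
     (if min a d = 0 then None else Some (Arr (a - 1) b (c + 1) (d - 1) x (y + 1) z (k + 1)))"
fun e2A :: "arr \<Rightarrow> arr option" where
  "e2A (Arr a b c d x y z k) =
     (if b = 0 then None else Some (Arr a (b - 1) (c + 3) d (x + 1) y (z + 1) (k + 1)))"
fun f1A :: "arr \<Rightarrow> arr option" where
  "f1A (Arr a b c d x y z k) =
     (if min c (min y k) = 0 then None else Some (Arr (a + 1) b (c - 1) (d + 1) x (y - 1) z (k - 1)))"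
fun f2A :: "arr \<Rightarrow> arr option" where
  "f2A (Arr a b c d x y z k) =
     (if min x (min z k) = 0 \<or> c < 3 then None
      else Some (Arr a (b + 1) (c - 3) d (x - 1) y (z - 1) (k - 1)))"

definition iterp :: "nat \<Rightarrow> ('a \<Rightarrow> 'a option) \<Rightarrow> 'a option \<Rightarrow> 'a option" where
  "iterp n g = (\<lambda>u. Option.bind u g) ^^ n"

definition eps1 :: "arr \<Rightarrow> nat" where
  "eps1 A = (GREATEST n. iterp n e1A (Some A) \<noteq> None)"
definition eps2 :: "arr \<Rightarrow> nat" where
  "eps2 A = (GREATEST n. iterp n e2A (Some A) \<noteq> None)"

definition hdA :: "arr \<Rightarrow> arr option" where
  "hdA A = iterp (eps1 A) e1A (iterp (eps2 A) e2A (Some A))"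

definition Aof :: "nat \<Rightarrow> nat \<Rightarrow> ld \<Rightarrow> arr" where
  "Aof l1 l2 m = Arr (m2 m) (m5 m) (m4 m) (m6 m)
      (nat (s2 l2 m + 1)) (nat (s6 l1 m + 1)) (nat (s5 l2 m + 1)) (deco l2 m)"

definition f1L :: "nat \<Rightarrow> nat \<Rightarrow> ld \<Rightarrow> ld option" where
  "f1L l1 l2 m = (if f1A (Aof l1 l2 m) = None then None
     else Some (LD (m1 m) (m2 m + 1) (m3 m) (m4 m - 1) (m5 m) (m6 m + 1)))"
definition f2L :: "nat \<Rightarrow> nat \<Rightarrow> ld \<Rightarrow> ld option" where
  "f2L l1 l2 m = (if f2A (Aof l1 l2 m) = None then None
     else Some (LD (m1 m) (m2 m) (m3 m + 1) (m4 m - 3) (m5 m + 1) (m6 m)))"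

definition RF :: "nat \<Rightarrow> nat \<Rightarrow> ld \<Rightarrow> ld set" where
  "RF l1 l2 m = {n \<in> Bres l1 l2. wt n = wt m \<and> hdA (Aof l1 l2 n) = hdA (Aof l1 l2 m)}"

definition is_head :: "nat \<Rightarrow> nat \<Rightarrow> ld \<Rightarrow> bool" where
  "is_head l1 l2 m \<longleftrightarrow> m \<in> Bres l1 l2 \<and> hdA (Aof l1 l2 m) = Some (Aof l1 l2 m)"

end

theory Submission imports Defs begin

text \<open>A head m has m3 = m5 = 0 and min m2 m6 = 0, so every member of its family is
  obtained from m by the lowering operators: n = f1^t1 f2^t2 m with t1 = min (m2 n) (m6 n) and
  t2 = m5 n. Conversely each lowering f1^t1 f2^t2 m stays in B(lambda+rho)_res, keeps the weight and
  the head of its array, as long as t1 \<le> s6 + 1, t2 \<le> min s2 s5 + 1 and t1 + t2 does not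
  exhaust the decoration d(m) = -s3/2. If d(m) \<le> (min s2 s5 + 1) + (s6 + 1), a lowering with
  t1 + t2 = d(m) has s3 = s4 = 0 and lies in B(lambda+rho); hence disjointness forces d(m) to be
  large, and then the whole rectangle of lowerings is admissible.\<close>

lemma iterp_0 [simp]: "iterp 0 g u = u"
  by (simp add: iterp_def)

lemma iterp_Suc: "iterp (Suc n) g u = Option.bind (iterp n g u) g"
  by (simp add: iterp_def)

lemma iterp_e2A: "iterp n e2A (Some (Arr a b c d x y z k)) =
  (if n \<le> b then Some (Arr a (b - n) (c + 3 * n) d (x + n) y (z + n) (k + n)) else None)"
  by (induct n) (auto simp: iterp_Suc)

lemma iterp_e1A: "iterp n e1A (Some (Arr a b c d x y z k)) =
  (if n \<le> min a d then Some (Arr (a - n) b (c + n) (d - n) x (y + n) z (k + n)) else None)"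
  by (induct n) (auto simp: iterp_Suc)

lemma eps2_Arr: "eps2 (Arr a b c d x y z k) = b"
  unfolding eps2_def iterp_e2A by (rule Greatest_equality) (auto split: if_splits)

lemma eps1_Arr: "eps1 (Arr a b c d x y z k) = min a d"
  unfolding eps1_def iterp_e1A by (rule Greatest_equality) (auto split: if_splits)

lemma hdA_Arr: "hdA (Arr a b c d x y z k) = Some (Arr (a - min a d) 0 (c + 3 * b + min a d)
   (d - min a d) (x + b) (y + min a d) (z + b) (k + b + min a d))"
  by (simp add: hdA_def eps1_Arr eps2_Arr iterp_e2A iterp_e1A)

lemma deco_eqI: "s3 l2 m = - 2 * int D \<Longrightarrow> deco l2 m = D"
  by (simp add: deco_def)

lemma s3_Bres: "m \<in> Bres l1 l2 \<Longrightarrow> s3 l2 m = - 2 * int (deco l2 m)"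
proof -
  assume "m \<in> Bres l1 l2"
  then have "even (s3 l2 m)" "s3 l2 m \<le> 0"
    by (auto simp: Bres_def)
  then obtain b where "s3 l2 m = 2 * b" "b \<le> 0"
    by (auto elim!: evenE)
  then show ?thesis
    by (simp add: deco_def)
qed

lemma m4_Bres: "m \<in> Bres l1 l2 \<Longrightarrow> int (m4 m) + int (m3 m) = int l2 + int (m6 m) + 2 * int (deco l2 m)"
  using s3_Bres[of m l1 l2] by (simp add: s3_def)

text \<open>The Lusztig datum f1^t1 f2^t2 m, whenever this lowering is nonzero.\<close>
definition lowered :: "ld \<Rightarrow> nat \<Rightarrow> nat \<Rightarrow> ld" where
  "lowered m t1 t2 = LD (m1 m) (m2 m + t1) (m3 m + t2) (m4 m - 3 * t2 - t1) (m5 m + t2) (m6 m + t1)"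

lemma lowered_sel [simp]:
  "m1 (lowered m t1 t2) = m1 m" "m2 (lowered m t1 t2) = m2 m + t1" "m3 (lowered m t1 t2) = m3 m + t2"
  "m4 (lowered m t1 t2) = m4 m - 3 * t2 - t1" "m5 (lowered m t1 t2) = m5 m + t2"
  "m6 (lowered m t1 t2) = m6 m + t1"
  by (simp_all add: lowered_def)

lemma lowered_0_0 [simp]: "lowered m 0 0 = m"
  by (cases m) (simp add: lowered_def)

lemma lowered_lowered: "lowered (lowered m 0 t2) t1 0 = lowered m t1 t2"
  by (simp add: lowered_def)

lemma s1_lowered [simp]: "s1 l2 (lowered m t1 t2) = s1 l2 m"
  by (simp add: lowered_def s1_def)

lemma s2_lowered [simp]: "s2 l2 (lowered m t1 t2) = s2 l2 m - int t2"
  by (simp add: lowered_def s2_def)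

lemma s5_lowered [simp]: "s5 l2 (lowered m t1 t2) = s5 l2 m - int t2"
  by (simp add: lowered_def s5_def)

lemma s6_lowered [simp]: "s6 l1 (lowered m t1 t2) = s6 l1 m - int t1"
  by (simp add: lowered_def s6_def)

lemma s3_lowered: "3 * t2 + t1 \<le> m4 m \<Longrightarrow> s3 l2 (lowered m t1 t2) = s3 l2 m + 2 * int (t1 + t2)"
  by (simp add: lowered_def s3_def)

lemma s4_lowered: "3 * t2 + t1 \<le> m4 m \<Longrightarrow> s4 l2 (lowered m t1 t2) = s4 l2 m + 2 * int (t1 + t2)"
  by (simp add: lowered_def s4_def)

lemma wt_lowered: "3 * t2 + t1 \<le> m4 m \<Longrightarrow> wt (lowered m t1 t2) = wt m"
  by (simp add: lowered_def wt_def)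

lemma deco_lowered:
  "\<lbrakk>s3 l2 m = - 2 * int D; t1 + t2 \<le> D; 3 * t2 + t1 \<le> m4 m\<rbrakk> \<Longrightarrow> deco l2 (lowered m t1 t2) = D - t1 - t2"
  by (rule deco_eqI) (simp add: s3_lowered)

lemma iterp_f2L:
  assumes "s3 l2 m = - 2 * int D" "s2 l2 m \<ge> -1" "s5 l2 m \<ge> -1"
  shows "iterp n (f2L l1 l2) (Some m) =
    (if int n \<le> s2 l2 m + 1 \<and> int n \<le> s5 l2 m + 1 \<and> n \<le> D \<and> 3 * n \<le> m4 m
     then Some (lowered m 0 n) else None)"
proof (induct n)
  case 0
  show ?case using assms by simp
next
  case (Suc n)
  show ?case
  proof (cases "int n \<le> s2 l2 m + 1 \<and> int n \<le> s5 l2 m + 1 \<and> n \<le> D \<and> 3 * n \<le> m4 m")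
    case False
    then show ?thesis using Suc by (auto simp: iterp_Suc)
  next
    case True
    then have "deco l2 (lowered m 0 n) = D - n"
      using deco_lowered[OF assms(1), of 0 n] by simp
    with True show ?thesis
      using Suc by (auto simp: iterp_Suc f2L_def Aof_def lowered_def s2_def s5_def)
  qed
qed

lemma iterp_f1L:
  assumes "s3 l2 m = - 2 * int D" "s6 l1 m \<ge> -1"
  shows "iterp n (f1L l1 l2) (Some m) =
    (if int n \<le> s6 l1 m + 1 \<and> n \<le> D \<and> n \<le> m4 m then Some (lowered m n 0) else None)"
proof (induct n)
  case 0
  show ?case using assms by simp
next
  case (Suc n)
  show ?case
  proof (cases "int n \<le> s6 l1 m + 1 \<and> n \<le> D \<and> n \<le> m4 m")
    case False
    then show ?thesis using Suc by (auto simp: iterp_Suc)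
  next
    case True
    then have "deco l2 (lowered m n 0) = D - n"
      using deco_lowered[OF assms(1), of n 0] by simp
    with True show ?thesis
      using Suc by (auto simp: iterp_Suc f1L_def Aof_def lowered_def s6_def)
  qed
qed

context
  fixes l1 l2 :: nat and m :: ld and t1 t2 :: nat
  assumes m_Bres: "m \<in> Bres l1 l2"
    and t1_le: "int t1 \<le> s6 l1 m + 1"
    and t2_le: "int t2 \<le> min (s2 l2 m) (s5 l2 m) + 1"
    and t_deco: "t1 + t2 \<le> deco l2 m"
    and t_m4: "3 * t2 + t1 \<le> m4 m"
begin

lemma t2_le_s2: "int t2 \<le> s2 l2 m + 1" and t2_le_s5: "int t2 \<le> s5 l2 m + 1"
  using t2_le by simp_all

lemma iterp_f1L_f2L:
  "iterp t1 (f1L l1 l2) (iterp t2 (f2L l1 l2) (Some m)) = Some (lowered m t1 t2)"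
proof -
  have s: "s2 l2 m \<ge> -1" "s5 l2 m \<ge> -1" "s6 l1 m \<ge> -1"
    using m_Bres by (simp_all add: Bres_def)
  have "iterp t2 (f2L l1 l2) (Some m) = Some (lowered m 0 t2)"
    using t2_le_s2 t2_le_s5 t_deco t_m4 by (simp add: iterp_f2L[OF s3_Bres[OF m_Bres] s(1,2)])
  moreover have s3': "s3 l2 (lowered m 0 t2) = - 2 * int (deco l2 m - t2)"
    using t_deco t_m4 by (simp add: s3_lowered s3_Bres[OF m_Bres])
  moreover have s6': "s6 l1 (lowered m 0 t2) \<ge> -1"
    using s(3) by simp
  ultimately have "iterp t1 (f1L l1 l2) (iterp t2 (f2L l1 l2) (Some m)) = Some (lowered (lowered m 0 t2) t1 0)"
    using t1_le t_deco t_m4 by (simp add: iterp_f1L[OF s3' s6']; linarith)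
  then show ?thesis
    by (simp add: lowered_lowered)
qed

lemma hdA_Aof_lowered: "hdA (Aof l1 l2 (lowered m t1 t2)) = hdA (Aof l1 l2 m)"
proof -
  have "deco l2 (lowered m t1 t2) = deco l2 m - t1 - t2"
    using t_deco t_m4 by (simp add: deco_lowered s3_Bres[OF m_Bres])
  moreover have "min (m2 m + t1) (m6 m + t1) = min (m2 m) (m6 m) + t1"
    by simp
  ultimately show ?thesis
    using t1_le t2_le_s2 t2_le_s5 t_deco t_m4 by (simp add: Aof_def hdA_Arr) arith
qed

lemma lowered_in_RF: "lowered m t1 t2 \<in> RF l1 l2 m"
proof -
  have "s3 l2 (lowered m t1 t2) = - 2 * int (deco l2 m - t1 - t2)"
    using t_deco t_m4 by (simp add: s3_lowered s3_Bres[OF m_Bres])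
  moreover have "s4 l2 (lowered m t1 t2) = s3 l2 (lowered m t1 t2)"
    using m_Bres t_m4 by (simp add: s3_lowered s4_lowered Bres_def)
  moreover have "m3 (lowered m t1 t2) = m5 (lowered m t1 t2)"
    using m_Bres by (simp add: lowered_def Bres_def)
  ultimately have "lowered m t1 t2 \<in> Bres l1 l2"
    using m_Bres t1_le t2_le by (auto simp: Bres_def)
  then show ?thesis
    using t_m4 by (simp add: RF_def wt_lowered hdA_Aof_lowered)
qed

end

lemma Bres_s3_zero_imp_Bset: "\<lbrakk>n \<in> Bres l1 l2; s3 l2 n = 0\<rbrakk> \<Longrightarrow> n \<in> Bset l1 l2"
  by (simp add: Bres_def Bset_def)

lemma is_head_shape:
  assumes "is_head l1 l2 m"
  shows "m3 m = 0" "m5 m = 0" "min (m2 m) (m6 m) = 0"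
proof -
  have "m5 m = 0 \<and> min (m2 m) (m6 m) = 0"
    using assms by (simp add: is_head_def Aof_def hdA_Arr)
  moreover have "m3 m = m5 m"
    using assms by (simp add: is_head_def Bres_def)
  ultimately show "m3 m = 0" "m5 m = 0" "min (m2 m) (m6 m) = 0"
    by simp_all
qed

lemma RF_head_obtain_lowered:
  assumes head: "is_head l1 l2 m" and n: "n \<in> RF l1 l2 m"
  obtains t1 t2 where "int t1 \<le> s6 l1 m + 1" "int t2 \<le> min (s2 l2 m) (s5 l2 m) + 1"
    and "n = lowered m t1 t2"
proof -
  define t1 where "t1 = min (m2 n) (m6 n)"
  define t2 where "t2 = m5 n"
  have Bn: "m3 n = m5 n" "s2 l2 n \<ge> -1" "s5 l2 n \<ge> -1" "s6 l1 n \<ge> -1"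
    using n by (auto simp: RF_def Bres_def)
  have Bm: "s2 l2 m \<ge> -1" "s5 l2 m \<ge> -1" "s6 l1 m \<ge> -1"
    using head by (auto simp: is_head_def Bres_def)
  have "hdA (Aof l1 l2 n) = Some (Aof l1 l2 m)"
    using n head by (simp add: RF_def is_head_def)
  then have E: "m2 n - t1 = m2 m" "m4 n + 3 * t2 + t1 = m4 m" "m6 n - t1 = m6 m"
      "nat (s2 l2 n + 1) + t2 = nat (s2 l2 m + 1)" "nat (s6 l1 n + 1) + t1 = nat (s6 l1 m + 1)"
      "nat (s5 l2 n + 1) + t2 = nat (s5 l2 m + 1)"
    by (simp_all add: Aof_def hdA_Arr t1_def t2_def)
  have t1_le: "int t1 \<le> s6 l1 m + 1"
    using E(5) Bn(4) Bm(3) by linarith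
  have t2_le: "int t2 \<le> min (s2 l2 m) (s5 l2 m) + 1"
    using E(4,6) Bn(2,3) Bm(1,2) by linarith
  have "t1 \<le> m2 n" "t1 \<le> m6 n"
    by (simp_all add: t1_def)
  then have q2: "m2 n = m2 m + t1" and q6: "m6 n = m6 m + t1"
    using E(1,3) by linarith+
  have "snd (wt n) = snd (wt m)"
    using n by (simp add: RF_def)
  then have q1: "m1 n = m1 m"
    using q2 E(2) Bn(1) is_head_shape[OF head] by (simp add: wt_def t2_def)
  have "n = lowered m t1 t2"
    using q1 q2 q6 E(2) Bn(1) is_head_shape[OF head]
    by (cases n) (simp add: lowered_def t2_def)
  with t1_le t2_le show ?thesis
    by (rule that)
qed

text \<open>The witness spends the f1-budget s6 + 1 first; then t2 \<le> l2 + m6 + t1, which is what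
  makes 3 t2 + t1 fit into m4 = l2 + m6 + 2 d(m).\<close>
lemma deco_gt_if_RF_disjoint_Bset:
  assumes m: "m \<in> Bres l1 l2" and head: "is_head l1 l2 m"
    and disj: "RF l1 l2 m \<inter> Bset l1 l2 = {}"
  shows "min (s2 l2 m) (s5 l2 m) + s6 l1 m + 2 < int (deco l2 m)"
proof (rule ccontr)
  assume small: "\<not> ?thesis"
  define D where "D = deco l2 m"
  define t1 where "t1 = min (nat (s6 l1 m + 1)) D"
  define t2 where "t2 = D - t1"
  have s: "s2 l2 m \<ge> -1" "s5 l2 m \<ge> -1" "s6 l1 m \<ge> -1"
    using m by (simp_all add: Bres_def)
  have t1_le: "int t1 \<le> s6 l1 m + 1"
    using s(3) by (simp add: t1_def)
  have t2_le: "int t2 \<le> min (s2 l2 m) (s5 l2 m) + 1"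
    using small s by (simp add: t2_def t1_def D_def)
  have "t2 \<le> l2 + m6 m + t1"
  proof (cases "t2 = 0")
    case False
    then have "int t1 = s6 l1 m + 1"
      using s(3) by (auto simp: t2_def t1_def)
    then show ?thesis
      using t2_le is_head_shape[OF head] by (simp add: s5_def s6_def)
  qed simp
  moreover have t_deco: "t1 + t2 = deco l2 m"
    by (simp add: t2_def t1_def D_def)
  ultimately have t_m4: "3 * t2 + t1 \<le> m4 m"
    using m4_Bres[OF m] is_head_shape[OF head] by linarith
  have "lowered m t1 t2 \<in> RF l1 l2 m"
    using m t1_le t2_le _ t_m4 by (rule lowered_in_RF) (simp add: t_deco)
  moreover have "s3 l2 (lowered m t1 t2) = 0"
    using t_m4 t_deco s3_Bres[OF m] by (simp add: s3_lowered)
  ultimately have "lowered m t1 t2 \<in> RF l1 l2 m \<inter> Bset l1 l2"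
    by (simp add: RF_def Bres_s3_zero_imp_Bset)
  with disj show False
    by blast
qed

theorem mainTheorem8:
  fixes l1 l2 :: nat and m :: ld
  assumes "m \<in> Bres l1 l2"
    and "is_head l1 l2 m"
    and "RF l1 l2 m \<inter> Bset l1 l2 = {}"
  shows "(\<forall>t1 t2. int t1 \<le> s6 l1 m + 1 \<longrightarrow> int t2 \<le> min (s2 l2 m) (s5 l2 m) + 1 \<longrightarrow>
            iterp t1 (f1L l1 l2) (iterp t2 (f2L l1 l2) (Some m)) \<noteq> None)
       \<and> RF l1 l2 m = {the (iterp t1 (f1L l1 l2) (iterp t2 (f2L l1 l2) (Some m))) | t1 t2.
            int t1 \<le> s6 l1 m + 1 \<and> int t2 \<le> min (s2 l2 m) (s5 l2 m) + 1}"
proof -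
  have lowering: "iterp t1 (f1L l1 l2) (iterp t2 (f2L l1 l2) (Some m)) = Some (lowered m t1 t2)
      \<and> lowered m t1 t2 \<in> RF l1 l2 m"
    if t: "int t1 \<le> s6 l1 m + 1" "int t2 \<le> min (s2 l2 m) (s5 l2 m) + 1" for t1 t2
  proof -
    have "t1 + t2 \<le> deco l2 m" "3 * t2 + t1 \<le> m4 m"
      using t deco_gt_if_RF_disjoint_Bset[OF assms] m4_Bres[OF assms(1)]
        is_head_shape[OF assms(2)] by (simp_all add: s5_def)
    with assms(1) t show ?thesis
      by (simp add: iterp_f1L_f2L lowered_in_RF)
  qed
  show ?thesis
  proof (intro conjI allI impI set_eqI iffI)
    fix n
    assume "n \<in> RF l1 l2 m"
    with assms(2) obtain t1 t2 where t: "int t1 \<le> s6 l1 m + 1" "int t2 \<le> min (s2 l2 m) (s5 l2 m) + 1"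
      and "n = lowered m t1 t2"
      by (rule RF_head_obtain_lowered)
    with lowering have "n = the (iterp t1 (f1L l1 l2) (iterp t2 (f2L l1 l2) (Some m)))"
      by simp
    with t show "n \<in> {the (iterp t1 (f1L l1 l2) (iterp t2 (f2L l1 l2) (Some m))) | t1 t2.
        int t1 \<le> s6 l1 m + 1 \<and> int t2 \<le> min (s2 l2 m) (s5 l2 m) + 1}"
      by blast
  next
    fix n
    assume "n \<in> {the (iterp t1 (f1L l1 l2) (iterp t2 (f2L l1 l2) (Some m))) | t1 t2.
        int t1 \<le> s6 l1 m + 1 \<and> int t2 \<le> min (s2 l2 m) (s5 l2 m) + 1}"
    with lowering show "n \<in> RF l1 l2 m"
      by force
  qed (simp add: lowering)
qed

end
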